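(* Let $\mathcal{A}$ be a unital $\mathbb{F}$-algebra with $\dim\mathcal{A}=n>4$, let $S$ be a generating set of $\mathcal{A}$, and let $(m_0,m_1,\ldots,m_{n-1})$ be the characteristic sequence of $S$. If $h\in\{4,\ldots,n-1\}$ and $m_h>2^{h-2}$, then $m_h=2^{h-2}+2^{q}$ for some $q\in\{0,\ldots,h-2\}$.
   Context: All algebras are finite-dimensional, unital, not necessarily associative algebras over a field $\mathbb{F}$. For a finite generating set $S$ of $\mathcal{A}$, a word in $S$ is any product (with any bracketing) of finitely many elements of $S$; its length is the number of factors, and $1$ is a word of length $0$. $L_i(S)$ is the linear span of all words in $S$ of length at most $i$ (so $L_0(S)=\mathbb{F}$). The characteristic sequence of $S$ is the non-decreasing sequence of non-negative integers $(m_0,\ldots,m_{n-1})$ constructed as follows: $m_0=0$; with $s_1=\dim L_1(S)-1$, set $m_1=\cdots=m_{s_1}=1$; inductively, if $m_1,\ldots,m_r$ are defined using $L_1(S),\ldots,L_{k-1}(S)$, put $s_k=\dim L_k(S)-\dim L_{k-1}(S)$ and set $m_{r+1}=\cdots=m_{r+s_k}=k$. (Thus each $k\ge1$ occurs exactly $\dim L_k(S)-\dim L_{k-1}(S)$ times, and the sequence has $n=\dim\mathcal{A}$ terms.) *)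

theory Defs
  imports "HOL.Vector_Spaces"
begin

definition unital_algebra ::
  "('f::field \<Rightarrow> 'v::ab_group_add \<Rightarrow> 'v) \<Rightarrow> ('v \<Rightarrow> 'v \<Rightarrow> 'v) \<Rightarrow> 'v \<Rightarrow> bool" where
  "unital_algebra scale mult one \<longleftrightarrow>
     vector_space scale \<and>
     (\<forall>x y z. mult (x + y) z = mult x z + mult y z) \<and>
     (\<forall>x y z. mult x (y + z) = mult x y + mult x z) \<and>
     (\<forall>c x y. mult (scale c x) y = scale c (mult x y)) \<and>
     (\<forall>c x y. mult x (scale c y) = scale c (mult x y)) \<and>
     (\<forall>x. mult one x = x \<and> mult x one = x)"

definition fin_dim :: "('f::field \<Rightarrow> 'v::ab_group_add \<Rightarrow> 'v) \<Rightarrow> bool" where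
  "fin_dim scale \<longleftrightarrow> (\<exists>B. finite B \<and> module.span scale B = UNIV)"

text \<open>Words in S together with their length: (k, w) means w is a word of length k.
  1 is the word of length 0, elements of S are words of length 1, and a product
  (with any bracketing) of words of lengths i and j is a word of length i + j.\<close>

inductive_set words :: "('v \<Rightarrow> 'v \<Rightarrow> 'v) \<Rightarrow> 'v \<Rightarrow> 'v set \<Rightarrow> (nat \<times> 'v) set"
  for mult :: "'v \<Rightarrow> 'v \<Rightarrow> 'v" and one :: 'v and S :: "'v set" where
  word_one: "(0, one) \<in> words mult one S"
| word_gen: "s \<in> S \<Longrightarrow> (1, s) \<in> words mult one S"
| word_mult: "(i, u) \<in> words mult one S \<Longrightarrow> (j, w) \<in> words mult one S \<Longrightarrow>
      (i + j, mult u w) \<in> words mult one S"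

definition Lspace ::
  "('f::field \<Rightarrow> 'v::ab_group_add \<Rightarrow> 'v) \<Rightarrow> ('v \<Rightarrow> 'v \<Rightarrow> 'v) \<Rightarrow> 'v \<Rightarrow> 'v set \<Rightarrow> nat \<Rightarrow> 'v set" where
  "Lspace scale mult one S i = module.span scale {w. \<exists>k\<le>i. (k, w) \<in> words mult one S}"

definition generating_set ::
  "('f::field \<Rightarrow> 'v::ab_group_add \<Rightarrow> 'v) \<Rightarrow> ('v \<Rightarrow> 'v \<Rightarrow> 'v) \<Rightarrow> 'v \<Rightarrow> 'v set \<Rightarrow> bool" where
  "generating_set scale mult one S \<longleftrightarrow>
     finite S \<and> module.span scale {w. \<exists>k. (k, w) \<in> words mult one S} = UNIV"

text \<open>Characteristic sequence: each k \<ge> 1 occurs exactly dim L_k - dim L_(k-1) times and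
  m_0 = 0, the sequence being non-decreasing; equivalently m_h is the least k with
  h < dim L_k (for h < n).\<close>

definition char_seq ::
  "('f::field \<Rightarrow> 'v::ab_group_add \<Rightarrow> 'v) \<Rightarrow> ('v \<Rightarrow> 'v \<Rightarrow> 'v) \<Rightarrow> 'v \<Rightarrow> 'v set \<Rightarrow> nat \<Rightarrow> nat" where
  "char_seq scale mult one S h =
     (LEAST k. h < vector_space.dim scale (Lspace scale mult one S k))"

end

theory Submission
  imports Defs
begin

text \<open>Write L_k for the span of the words of length at most k. Since
  L_p L_q \<subseteq> L_{p+q} and the unit is the only word of length 0, a jump
  L_{k+1} \<subset> L_{k+2} of the filtration forces jumps at steps i+1 and j+1 with
  i + j = k: a new word of length k+2 is a product of two words of positive length, neither
  of which may drop to the previous step. In terms of the characteristic sequence this says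
  that every term m_h > 1 is a sum m_i + m_j of two earlier terms. Everything else is
  combinatorics of such sequences: by induction m_h \<le> 2^(h-1), with equality only if
  m_c = 2^(c-1) for all c \<le> h, and a term m_h > 2^(h-2) must be m_(h-1) + m_c; a short
  case analysis on the inductively known forms of m_(h-1) and m_(h-2) then yields the
  binary shape 2^(h-2) + 2^q.\<close>

lemma two_pow_less_add_two_pow_imp_eq:
  fixes q r s :: nat
  assumes "q \<le> s" "r \<le> s" "2 ^ s < 2 ^ q + (2::nat) ^ r"
  shows "q = s \<or> r = s"
proof (rule ccontr)
  assume "\<not> (q = s \<or> r = s)"
  then obtain s' where s: "s = Suc s'" "q \<le> s'" "r \<le> s'"
    using assms(1,2) by (cases s) auto
  then have "(2::nat) ^ q \<le> 2 ^ s'" "(2::nat) ^ r \<le> 2 ^ s'"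
    by (simp_all add: power_increasing)
  moreover have "(2::nat) ^ s = 2 ^ s' + 2 ^ s'"
    using s(1) by simp
  ultimately show False
    using assms(3) by linarith
qed

locale sum_generated_seq =
  fixes m :: "nat \<Rightarrow> nat" and N :: nat
  assumes small_or_sum_of_earlier: "1 \<le> h \<Longrightarrow> h < N \<Longrightarrow>
    m h \<le> 1 \<or> (\<exists>i j. 1 \<le> i \<and> i < h \<and> 1 \<le> j \<and> j < h \<and> m h = m i + m j)"
begin

text \<open>Terms are mostly indexed as m (Suc (Suc k)), i.e. h = k + 2, so that the exponents
  h - 2 and h - 1 become k and Suc k without truncated subtraction.\<close>

lemma le_two_pow: "1 \<le> i \<Longrightarrow> i < N \<Longrightarrow> m i \<le> 2 ^ (i - 1)"
proof (induction i rule: less_induct)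
  case (less h)
  consider "m h \<le> 1"
    | i j where "1 \<le> i" "i < h" "1 \<le> j" "j < h" "m h = m i + m j"
    using small_or_sum_of_earlier less.prems by blast
  then show ?case
  proof cases
    case 1
    then show ?thesis by (simp add: order_trans)
  next
    case 2
    have bound: "m i \<le> 2 ^ (h - 2)" if "1 \<le> i" "i < h" for i
    proof -
      have "m i \<le> 2 ^ (i - 1)"
        using less.IH less.prems that by simp
      also have "\<dots> \<le> 2 ^ (h - 2)"
        using that by (simp add: power_increasing)
      finally show ?thesis .
    qed
    from 2 have "h - 1 = Suc (h - 2)" by simp
    then have "(2::nat) ^ (h - 1) = 2 ^ (h - 2) + 2 ^ (h - 2)"
      by simp
    with 2 bound[of i] bound[of j] show ?thesis by linarith
  qed
qed

lemma le_two_pow_of_le: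
  assumes "1 \<le> i" "i \<le> Suc k" "Suc k < N"
  shows "m i \<le> 2 ^ k"
proof -
  have "m i \<le> 2 ^ (i - 1)"
    using assms by (intro le_two_pow) simp_all
  also have "\<dots> \<le> 2 ^ k"
    using assms(2) by (simp add: power_increasing)
  finally show ?thesis .
qed

lemma two_pow_predecessor:
  assumes "Suc (Suc k) < N" and top: "m (Suc (Suc k)) = 2 ^ Suc k"
  shows "m (Suc k) = 2 ^ k"
proof -
  have "(0::nat) < 2 ^ k"
    by simp
  then have "\<not> m (Suc (Suc k)) \<le> 1"
    using top by (simp only: power_Suc)
  then obtain i j where ij: "1 \<le> i" "i < Suc (Suc k)" "1 \<le> j" "j < Suc (Suc k)"
    and sum: "m (Suc (Suc k)) = m i + m j"
    using small_or_sum_of_earlier[of "Suc (Suc k)"] assms(1) by auto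
  have "m i \<le> 2 ^ k" "m j \<le> 2 ^ k"
    using ij assms(1) by (simp_all add: le_two_pow_of_le)
  then have "m i = 2 ^ k"
    using top sum by simp
  moreover have "m i \<le> 2 ^ (i - 1)"
    using ij assms(1) by (intro le_two_pow) simp_all
  ultimately have "k \<le> i - 1"
    by simp
  then have "i = Suc k"
    using ij by simp
  with \<open>m i = 2 ^ k\<close> show ?thesis by simp
qed

lemma two_pow_downward:
  "Suc k < N \<Longrightarrow> m (Suc k) = 2 ^ k \<Longrightarrow> c \<le> k \<Longrightarrow> m (Suc c) = 2 ^ c"
proof (induction k)
  case (Suc k)
  then show ?case
    using two_pow_predecessor[of k] by (cases "c = Suc k") simp_all
qed simp

lemma large_term_sum_with_predecessor:
  assumes "Suc (Suc k) < N" and large: "2 ^ k < m (Suc (Suc k))"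
  shows "\<exists>c \<le> k. m (Suc (Suc k)) = m (Suc k) + m (Suc c)"
proof -
  have "\<not> m (Suc (Suc k)) \<le> 1"
    using large by (metis le_trans not_le one_le_power one_le_numeral)
  then obtain i j where ij: "1 \<le> i" "i < Suc (Suc k)" "1 \<le> j" "j < Suc (Suc k)"
    and sum: "m (Suc (Suc k)) = m i + m j"
    using small_or_sum_of_earlier[of "Suc (Suc k)"] assms(1) by auto
  have "i = Suc k \<or> j = Suc k"
  proof (rule ccontr)
    assume "\<not> (i = Suc k \<or> j = Suc k)"
    then obtain k' where k: "k = Suc k'" and "i \<le> Suc k'" "j \<le> Suc k'"
      using ij by (cases k) auto
    then have "m i \<le> 2 ^ k'" "m j \<le> 2 ^ k'"
      using ij assms(1) by (simp_all add: le_two_pow_of_le)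
    then show False
      using large sum k by simp
  qed
  then show ?thesis
  proof
    assume "i = Suc k"
    then show ?thesis
      using ij sum by (intro exI[of _ "j - 1"]) simp
  next
    assume "j = Suc k"
    then show ?thesis
      using ij sum by (intro exI[of _ "i - 1"]) simp
  qed
qed

lemma large_term_two_pow_add_two_pow:
  "Suc (Suc k) < N \<Longrightarrow> 2 ^ k < m (Suc (Suc k)) \<Longrightarrow> \<exists>q \<le> k. m (Suc (Suc k)) = 2 ^ k + 2 ^ q"
proof (induction k rule: less_induct)
  case (less k)
  obtain c where "c \<le> k" and split: "m (Suc (Suc k)) = m (Suc k) + m (Suc c)"
    using large_term_sum_with_predecessor less.prems by blast
  have "m (Suc k) \<le> 2 ^ k"
    using le_two_pow_of_le less.prems(1) by simp
  then consider (top) "m (Suc k) = 2 ^ k" | (below) "m (Suc k) < 2 ^ k"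
    by linarith
  then show ?case
  proof cases
    case top
    then have "m (Suc c) = 2 ^ c"
      using two_pow_downward[of k c] \<open>c \<le> k\<close> less.prems(1) by simp
    then show ?thesis
      using split top \<open>c \<le> k\<close> by auto
  next
    case below
    have "k \<noteq> 0"
    proof
      assume "k = 0"
      then show False
        using below split \<open>c \<le> k\<close> less.prems(2) by simp
    qed
    then obtain k' where k: "k = Suc k'"
      by (cases k) auto
    have "2 ^ k' < m (Suc k)"
    proof (cases "c = k")
      case True
      then show ?thesis
        using split less.prems(2) k by simp
    next
      case False
      then have "m (Suc c) \<le> 2 ^ k'"
        using le_two_pow_of_le \<open>c \<le> k\<close> k less.prems(1) by simp
      then show ?thesis
        using split less.prems(2) k by simp
    qed
    then obtain q where "q \<le> k'" and q: "m (Suc k) = 2 ^ k' + 2 ^ q"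
      using less.IH[of k'] k less.prems(1) by auto
    have "q < k'"
      using below q k \<open>q \<le> k'\<close> by (cases "q = k'") simp_all
    show ?thesis
    proof (cases "c = k")
      case True
      then show ?thesis
        using split q k \<open>q < k'\<close> by (intro exI[of _ "Suc q"]) simp
    next
      case False
      with \<open>c \<le> k\<close> k have "c \<le> k'"
        by simp
      obtain k'' where k': "k' = Suc k''"
        using \<open>q < k'\<close> by (cases k') auto
      have two_pow_q: "(2::nat) ^ q \<le> 2 ^ k''"
        using \<open>q < k'\<close> k' by (simp add: power_increasing)
      have two_pow_k: "(2::nat) ^ k = 4 * 2 ^ k''" "(2::nat) ^ k' = 2 * 2 ^ k''"
        using k k' by simp_all
      have "c = k'"
      proof (rule ccontr)
        assume "c \<noteq> k'"
        then have "m (Suc c) \<le> 2 ^ k''"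
          using le_two_pow_of_le \<open>c \<le> k'\<close> k k' less.prems(1) by simp
        then show False
          using split q two_pow_q two_pow_k less.prems(2) by linarith
      qed
      with split q have split': "m (Suc (Suc k)) = 2 ^ k' + 2 ^ q + m (Suc k')"
        by simp
      then have "2 ^ k'' < m (Suc k')"
        using two_pow_q two_pow_k less.prems(2) by linarith
      then obtain r where "r \<le> k''" and r: "m (Suc k') = 2 ^ k'' + 2 ^ r"
        using less.IH[of k''] k k' less.prems(1) by auto
      have "2 ^ k'' < 2 ^ q + (2::nat) ^ r"
        using split' r two_pow_k less.prems(2) by linarith
      then have "q = k'' \<or> r = k''"
        using two_pow_less_add_two_pow_imp_eq \<open>q < k'\<close> \<open>r \<le> k''\<close> k' by simp
      then show ?thesis
      proof
        assume "q = k''"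
        then show ?thesis
          using split' r \<open>r \<le> k''\<close> two_pow_k k k' by (intro exI[of _ r]) simp
      next
        assume "r = k''"
        then show ?thesis
          using split' r \<open>q < k'\<close> two_pow_k k by (intro exI[of _ q]) simp
      qed
    qed
  qed
qed

end

lemma (in vector_space) bilinear_mem_span:
  assumes left: "\<And>y. Vector_Spaces.linear scale scale (\<lambda>x. f x y)"
    and right: "\<And>x. Vector_Spaces.linear scale scale (f x)"
    and "x \<in> span A" "y \<in> span B"
    and products: "\<And>a b. a \<in> A \<Longrightarrow> b \<in> B \<Longrightarrow> f a b \<in> span C"
  shows "f x y \<in> span C"
proof -
  have "f a y \<in> span C" if "a \<in> A" for a
  proof -
    have "f a y \<in> f a ` span B"
      using \<open>y \<in> span B\<close> by blast
    also have "\<dots> = span (f a ` B)"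
      using module_hom.span_image[of scale scale "f a" B] right by (simp add: module_hom_iff_linear)
    also have "\<dots> \<subseteq> span C"
      using products that by (intro span_minimal) auto
    finally show ?thesis .
  qed
  then have "span ((\<lambda>x. f x y) ` A) \<subseteq> span C"
    by (intro span_minimal) auto
  moreover have "f x y \<in> span ((\<lambda>x. f x y) ` A)"
    using module_hom.span_image[of scale scale "\<lambda>x. f x y" A] left \<open>x \<in> span A\<close>
    by (simp add: module_hom_iff_linear)
  ultimately show ?thesis
    by blast
qed

locale generated_unital_algebra = finite_dimensional_vector_space scale Basis
  for scale :: "'f::field \<Rightarrow> 'v::ab_group_add \<Rightarrow> 'v" and Basis :: "'v set" +
  fixes mult :: "'v \<Rightarrow> 'v \<Rightarrow> 'v" and one :: 'v and S :: "'v set"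
  assumes mult_add_left: "mult (x + y) z = mult x z + mult y z"
    and mult_add_right: "mult x (y + z) = mult x y + mult x z"
    and mult_scale_left: "mult (scale c x) y = scale c (mult x y)"
    and mult_scale_right: "mult x (scale c y) = scale c (mult x y)"
    and mult_one_left: "mult one x = x"
    and mult_one_right: "mult x one = x"
    and nontrivial: "one \<noteq> 0"
    and span_words: "span {w. \<exists>k. (k, w) \<in> words mult one S} = UNIV"
begin

abbreviation L :: "nat \<Rightarrow> 'v set" where
  "L \<equiv> Lspace scale mult one S"

lemma Lspace_eq: "L k = span {w. \<exists>j\<le>k. (j, w) \<in> words mult one S}"
  by (simp add: Lspace_def)

lemma subspace_Lspace: "subspace (L k)"
  by (simp add: Lspace_eq)

lemma Lspace_mono: "p \<le> q \<Longrightarrow> L p \<subseteq> L q"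
  unfolding Lspace_eq by (rule span_mono) (auto intro: le_trans)

lemma word_in_Lspace: "(j, w) \<in> words mult one S \<Longrightarrow> j \<le> k \<Longrightarrow> w \<in> L k"
  unfolding Lspace_eq by (rule span_base) auto

lemma linear_mult_left: "Vector_Spaces.linear scale scale (\<lambda>x. mult x y)"
  by (simp add: linear_iff vector_space_axioms mult_add_left mult_scale_left)

lemma linear_mult_right: "Vector_Spaces.linear scale scale (mult x)"
  by (simp add: linear_iff vector_space_axioms mult_add_right mult_scale_right)

lemma mult_Lspace:
  assumes "x \<in> L p" and "y \<in> L q"
  shows "mult x y \<in> L (p + q)"
  using linear_mult_left linear_mult_right assms unfolding Lspace_eq
proof (rule bilinear_mem_span)
  fix u v
  assume "u \<in> {w. \<exists>j\<le>p. (j, w) \<in> words mult one S}" "v \<in> {w. \<exists>j\<le>q. (j, w) \<in> words mult one S}"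
  then show "mult u v \<in> span {w. \<exists>j\<le>p + q. (j, w) \<in> words mult one S}"
    by (auto intro!: span_base intro: words.word_mult add_mono)
qed

lemma word_length_zero: "(0, w) \<in> words mult one S \<Longrightarrow> w = one"
proof (induction "0::nat" w rule: words.induct)
  case (word_mult i u j w)
  then show ?case by (simp add: mult_one_left)
qed auto

lemma word_split:
  "(Suc (Suc k), w) \<in> words mult one S \<Longrightarrow>
    \<exists>i j u v. i + j = k \<and> (Suc i, u) \<in> words mult one S \<and> (Suc j, v) \<in> words mult one S
      \<and> w = mult u v"
proof (induction "Suc (Suc k)" w arbitrary: k rule: words.induct)
  case (word_mult a u b v)
  consider "a = 0" | "b = 0" | i j where "a = Suc i" "b = Suc j"
    by (meson not0_implies_Suc)
  then show ?case
  proof cases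
    case 1
    with word_mult.hyps(1) have "u = one"
      by (simp add: word_length_zero)
    with 1 word_mult show ?thesis
      by (simp add: mult_one_left)
  next
    case 2
    with word_mult.hyps(3) have "v = one"
      by (simp add: word_length_zero)
    with 2 word_mult show ?thesis
      by (simp add: mult_one_right)
  next
    case 3
    then show ?thesis
      using word_mult by auto
  qed
qed auto

lemma dim_Lspace_0: "dim (L 0) = 1"
proof -
  have "{w. \<exists>j\<le>0. (j, w) \<in> words mult one S} = {one}"
    using word_length_zero words.word_one by auto
  then show ?thesis
    by (simp add: Lspace_eq nontrivial)
qed

lemma Lspace_eventually_UNIV: "\<exists>K. L K = UNIV"
proof -
  obtain K where K: "\<And>k. dim (L k) \<le> dim (L K)"
    using ex_has_greatest_nat[of "\<lambda>_. True" 0 "\<lambda>k. dim (L k)" "Suc dimension"]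
    by (auto simp: dim_subset_UNIV le_imp_less_Suc)
  have "L k \<subseteq> L K" for k
  proof -
    have "L K = L (max K k)"
      using K by (intro subspace_dim_equal subspace_Lspace Lspace_mono) simp_all
    then show ?thesis
      using Lspace_mono[of k "max K k"] by simp
  qed
  then have "{w. \<exists>k. (k, w) \<in> words mult one S} \<subseteq> L K"
    using word_in_Lspace by blast
  then show ?thesis
    using span_minimal[OF _ subspace_Lspace] span_words by blast
qed

lemma Lspace_jump_split:
  assumes "L (Suc k) \<subset> L (Suc (Suc k))"
  shows "\<exists>i j. i + j = k \<and> L i \<subset> L (Suc i) \<and> L j \<subset> L (Suc j)"
proof -
  have "\<not> {w. \<exists>j\<le>Suc (Suc k). (j, w) \<in> words mult one S} \<subseteq> L (Suc k)"
    using assms span_minimal[OF _ subspace_Lspace] unfolding Lspace_eq[of "Suc (Suc k)"] by blast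
  then obtain j w where "j \<le> Suc (Suc k)" and word: "(j, w) \<in> words mult one S"
    and w: "w \<notin> L (Suc k)"
    by blast
  moreover have "\<not> j \<le> Suc k"
    using word_in_Lspace[OF word] w by blast
  ultimately have "(Suc (Suc k), w) \<in> words mult one S"
    by (simp add: le_Suc_eq)
  then obtain i j u v where ij: "i + j = k" and u: "(Suc i, u) \<in> words mult one S"
    and v: "(Suc j, v) \<in> words mult one S" and uv: "w = mult u v"
    using word_split by blast
  have u_in: "u \<in> L (Suc i)" and v_in: "v \<in> L (Suc j)"
    using u v by (simp_all add: word_in_Lspace)
  have "u \<notin> L i"
  proof
    assume "u \<in> L i"
    from this v_in have "mult u v \<in> L (i + Suc j)"
      by (rule mult_Lspace)
    with w uv ij show False
      by simp
  qed
  moreover have "v \<notin> L j"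
  proof
    assume "v \<in> L j"
    with u_in have "mult u v \<in> L (Suc i + j)"
      by (rule mult_Lspace)
    with w uv ij show False
      by simp
  qed
  ultimately have "L i \<subset> L (Suc i)" and "L j \<subset> L (Suc j)"
    using u_in v_in Lspace_mono[of i "Suc i"] Lspace_mono[of j "Suc j"] by auto
  with ij show ?thesis
    by blast
qed

lemma dim_Lspace_less: "L p \<subset> L q \<Longrightarrow> dim (L p) < dim (L q)"
  by (rule dim_psubset) (simp add: Lspace_eq span_span)

abbreviation m :: "nat \<Rightarrow> nat" where
  "m \<equiv> char_seq scale mult one S"

lemma char_seq_spec:
  assumes "h < dim (UNIV :: 'v set)"
  shows "h < dim (L (m h))" and "k < m h \<Longrightarrow> dim (L k) \<le> h"
proof -
  obtain K where "L K = UNIV"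
    using Lspace_eventually_UNIV by blast
  with assms have "\<exists>k. h < dim (L k)"
    by metis
  then show "h < dim (L (m h))"
    unfolding char_seq_def by (rule LeastI_ex)
  show "k < m h \<Longrightarrow> dim (L k) \<le> h"
    unfolding char_seq_def by (meson not_less_Least not_le)
qed

lemma char_seq_at_jump:
  assumes "L i \<subset> L (Suc i)"
  shows "m (dim (L i)) = Suc i"
  unfolding char_seq_def
proof (rule Least_equality)
  show "dim (L i) < dim (L (Suc i))"
    using assms by (rule dim_Lspace_less)
  show "Suc i \<le> k" if "dim (L i) < dim (L k)" for k
  proof (rule ccontr)
    assume "\<not> Suc i \<le> k"
    then have "dim (L k) \<le> dim (L i)"
      by (intro dim_subset Lspace_mono) simp
    with that show False
      by simp
  qed
qed

lemma sum_generated_char_seq: "sum_generated_seq m (dim (UNIV :: 'v set))"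
proof
  fix h
  assume h: "1 \<le> h" "h < dim (UNIV :: 'v set)"
  show "m h \<le> 1 \<or> (\<exists>i j. 1 \<le> i \<and> i < h \<and> 1 \<le> j \<and> j < h \<and> m h = m i + m j)"
  proof (cases "m h \<le> 1")
    case False
    then obtain k where k: "m h = Suc (Suc k)"
      using le_Suc_ex[of 2 "m h"] by auto
    have "h < dim (L (Suc (Suc k)))" and below: "dim (L (Suc k)) \<le> h"
      using char_seq_spec[OF h(2)] k by simp_all
    then have "L (Suc k) \<noteq> L (Suc (Suc k))"
      using below by auto
    then have "L (Suc k) \<subset> L (Suc (Suc k))"
      using Lspace_mono[of "Suc k" "Suc (Suc k)"] by simp
    then obtain i j where ij: "i + j = k" and jumps: "L i \<subset> L (Suc i)" "L j \<subset> L (Suc j)"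
      using Lspace_jump_split by blast
    have earlier: "1 \<le> dim (L l) \<and> dim (L l) < h \<and> m (dim (L l)) = Suc l"
      if "l \<le> k" and jump: "L l \<subset> L (Suc l)" for l
    proof (intro conjI)
      show "1 \<le> dim (L l)"
        using dim_subset[OF Lspace_mono[of 0 l]] by (simp add: dim_Lspace_0)
      have "dim (L l) < dim (L (Suc l))"
        using jump by (rule dim_Lspace_less)
      also have "\<dots> \<le> dim (L (Suc k))"
        using \<open>l \<le> k\<close> by (intro dim_subset Lspace_mono) simp
      finally show "dim (L l) < h"
        using below by simp
      show "m (dim (L l)) = Suc l"
        using jump by (rule char_seq_at_jump)
    qed
    show ?thesis
      using earlier[of i] earlier[of j] ij jumps k
      by (intro disjI2 exI[of _ "dim (L i)"] exI[of _ "dim (L j)"]) simp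
  qed simp
qed

end

lemma fin_dim_obtains_basis:
  assumes "vector_space scale" and "fin_dim scale"
  obtains Basis where "finite_dimensional_vector_space scale Basis"
proof -
  interpret vector_space scale
    by (fact assms(1))
  obtain B where "finite B" and span_B: "span B = UNIV"
    using assms(2) by (auto simp: fin_dim_def)
  obtain Basis where "Basis \<subseteq> B" "independent Basis" "B \<subseteq> span Basis"
    using maximal_independent_subset[of B] by blast
  show ?thesis
  proof (rule that, intro finite_dimensional_vector_space.intro assms(1)
      finite_dimensional_vector_space_axioms.intro)
    show "finite Basis"
      using \<open>Basis \<subseteq> B\<close> \<open>finite B\<close> by (rule finite_subset)
    show "independent Basis"
      by fact
    show "span Basis = UNIV"
      using span_mono[OF \<open>B \<subseteq> span Basis\<close>] span_B by (auto simp: span_span)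
  qed
qed

lemma unital_algebra_one_eq_zero_imp_trivial:
  fixes scale :: "'f::field \<Rightarrow> 'v::ab_group_add \<Rightarrow> 'v" and x :: 'v
  assumes "unital_algebra scale mult one" and "one = 0"
  shows "x = 0"
proof -
  have "mult (0 + 0) x = mult 0 x + mult 0 x"
    using assms(1) unfolding unital_algebra_def by blast
  then have "mult 0 x = 0"
    by simp
  then show ?thesis
    using assms by (simp add: unital_algebra_def)
qed

theorem theorem4p2:
  fixes scale :: "'f::field \<Rightarrow> 'v::ab_group_add \<Rightarrow> 'v"
    and mult :: "'v \<Rightarrow> 'v \<Rightarrow> 'v" and one :: 'v and S :: "'v set" and n h :: nat
  assumes "unital_algebra scale mult one"
    and "fin_dim scale"
    and "vector_space.dim scale (UNIV :: 'v set) = n"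
    and "n > 4"
    and "generating_set scale mult one S"
    and "4 \<le> h" and "h \<le> n - 1"
    and "char_seq scale mult one S h > 2 ^ (h - 2)"
  shows "\<exists>q \<le> h - 2. char_seq scale mult one S h = 2 ^ (h - 2) + 2 ^ q"
proof -
  have "vector_space scale"
    using assms(1) by (simp add: unital_algebra_def)
  then obtain Basis where fd: "finite_dimensional_vector_space scale Basis"
    using assms(2) by (rule fin_dim_obtains_basis)
  interpret finite_dimensional_vector_space scale Basis
    by (fact fd)
  have "one \<noteq> 0"
  proof
    assume "one = 0"
    then have "(UNIV :: 'v set) = {0}"
      using unital_algebra_one_eq_zero_imp_trivial[OF assms(1)] by auto
    then have "dim (UNIV :: 'v set) = 0"
      by (simp del: dim_UNIV)
    then show False
      using assms(3,4) by simp
  qed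
  interpret generated_unital_algebra scale Basis mult one S
    using assms(1,5) \<open>one \<noteq> 0\<close> unfolding unital_algebra_def generating_set_def
    by (intro generated_unital_algebra.intro fd generated_unital_algebra_axioms.intro) auto
  interpret sum_generated_seq "char_seq scale mult one S" n
    using sum_generated_char_seq assms(3) by simp
  define k where "k = h - 2"
  with assms(6) have "h = Suc (Suc k)"
    by simp
  then show ?thesis
    using large_term_two_pow_add_two_pow[of k] assms(4,7,8) by simp
qed

end
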